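(* Let $H$ be a strictly $2$-balanced graph and suppose $n^{-1/m_2(H)}\le p\le 1$. Let $\mathcal{H}$ be the family of all copies of $H$ in $K_n$ and, for a vertex $v$, let $\mathcal{H}_v\subseteq\mathcal{H}$ be those copies containing $v$. For all sufficiently large $n$: (i) for every edge $e\in K_n$, $\Pr\big(|\partial\partial_e\mathcal{H}[G_{n,p}]|\ge 4e_H^2n^{v_H-2}p^{e_H-2}\big)\le n^{-6}$; (ii) for every vertex $v$, $\Pr\big(|\partial\mathcal{H}_v[G_{n,p}]|\ge 2v_He_Hn^{v_H-1}p^{e_H-1}\big)\le n^{-6}$.
   Context: Copies of $H$ are regarded as sets of edges of $K_n$, so $\mathcal{H}$ is a hypergraph on the vertex set $E(K_n)$. For a hypergraph $\mathcal{G}$ and a vertex $e$, $\partial_e\mathcal{G}=\{A\setminus\{e\}: e\in A\in\mathcal{G}\}$ and $\partial\mathcal{G}=\bigcup_e\partial_e\mathcal{G}$. For a graph $G$ (edge set), $\mathcal{G}[G]=\{A\in\mathcal{G}:A\subseteq G\}$, and $\partial\partial_e\mathcal{H}[G]$ means $(\partial\partial_e\mathcal{H})[G]$, $\partial\mathcal{H}_v[G]$ means $(\partial\mathcal{H}_v)[G]$. Thus $\partial\partial_e\mathcal{H}[G]$ is the set of edge sets $A\setminus\{e,f\}$ with $e\in A\in\mathcal{H}$, $f\in A\setminus\{e\}$, contained in $G$. $m_2(H)=\max\{(e_F-1)/(v_F-2):F\subseteq H, e_F\ge2\}$; strictly $2$-balanced means this is attained only at $F=H$. *)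

theory Defs
  imports "HOL-Probability.Probability"
begin

definition simple_graph :: "'a set \<Rightarrow> 'a set set \<Rightarrow> bool" where
  "simple_graph V E \<longleftrightarrow> finite V \<and> (\<forall>e\<in>E. e \<subseteq> V \<and> card e = 2)"

definition subgraphs2 :: "'a set \<Rightarrow> 'a set set \<Rightarrow> ('a set \<times> 'a set set) set" where
  "subgraphs2 V E = {(VF, EF). VF \<subseteq> V \<and> EF \<subseteq> E \<and> (\<forall>e\<in>EF. e \<subseteq> VF) \<and> card EF \<ge> 2}"

definition d2 :: "'a set \<Rightarrow> 'a set set \<Rightarrow> real" where
  "d2 VF EF = (real (card EF) - 1) / (real (card VF) - 2)"

definition m2 :: "'a set \<Rightarrow> 'a set set \<Rightarrow> real" where
  "m2 V E = Max ((\<lambda>(VF, EF). d2 VF EF) ` subgraphs2 V E)"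

definition strictly_2_balanced :: "'a set \<Rightarrow> 'a set set \<Rightarrow> bool" where
  "strictly_2_balanced V E \<longleftrightarrow> simple_graph V E \<and> card E \<ge> 2 \<and>
     (\<forall>(VF, EF) \<in> subgraphs2 V E. d2 VF EF = m2 V E \<longrightarrow> (VF, EF) = (V, E))"

definition Kn_edges :: "nat \<Rightarrow> nat set set" where
  "Kn_edges n = {e. e \<subseteq> {..<n} \<and> card e = 2}"

definition copies :: "'a set \<Rightarrow> 'a set set \<Rightarrow> nat \<Rightarrow> nat set set set" where
  "copies V E n = {(\<lambda>e. f ` e) ` E | f. inj_on f V \<and> f ` V \<subseteq> {..<n}}"

definition copies_at :: "'a set \<Rightarrow> 'a set set \<Rightarrow> nat \<Rightarrow> nat \<Rightarrow> nat set set set" where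
  "copies_at V E n v = {A \<in> copies V E n. v \<in> \<Union>A}"

definition hlink :: "'b set set \<Rightarrow> 'b \<Rightarrow> 'b set set" where
  "hlink G e = {A - {e} | A. A \<in> G \<and> e \<in> A}"

definition hshadow :: "'b set set \<Rightarrow> 'b set set" where
  "hshadow G = (\<Union>e. hlink G e)"

definition hrestrict :: "'b set set \<Rightarrow> 'b set \<Rightarrow> 'b set set" where
  "hrestrict G S = {A \<in> G. A \<subseteq> S}"

definition Gnp :: "nat \<Rightarrow> real \<Rightarrow> nat set set pmf" where
  "Gnp n p = map_pmf (\<lambda>X. {e \<in> Kn_edges n. X e})
                (Pi_pmf (Kn_edges n) False (\<lambda>_. bernoulli_pmf p))"

end

theory Submission
  imports Defs "HOL-Real_Asymp.Real_Asymp"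
begin

text \<open>
  Both counts are numbers \<open>X\<close> of members of a family \<open>F\<close> of \<open>s\<close>-edge sets
  (\<open>s = e\<^sub>H - 2\<close>, resp. \<open>e\<^sub>H - 1\<close>) that are present in \<open>G(n,p)\<close>. Expanding \<open>X\<^sup>k\<close> one member at
  a time, each new member either avoids the edges \<open>U\<close> collected so far, contributing at most
  the mean \<open>|F| p\<^sup>s\<close>, or meets \<open>U\<close> in a nonempty trace \<open>T\<close>, contributing at most the codegree
  \<open>|{B \<in> F. T \<subseteq> B}| p\<^sup>s\<^sup>-\<^sup>|\<^sup>T\<^sup>|\<close> for each of the at most \<open>|U|\<^sup>s\<close> traces.
  Members of \<open>F\<close> are images of \<open>H\<close> minus two edges (resp. one edge) under embeddings mapping
  a root edge onto \<open>e\<close> (resp. a root vertex onto \<open>v\<close>). A member containing \<open>T\<close> maps \<open>|T|\<close> edges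
  of \<open>H\<close> together with the root into a vertex set of bounded size, and since every proper
  subgraph of a strictly 2-balanced \<open>H\<close> is sparser than \<open>m\<^sub>2(H)\<close>, each codegree is below the
  mean by a factor \<open>n\<^sup>-\<^sup>\<delta>\<close> for a fixed \<open>\<delta> > 0\<close>. Taking \<open>K \<approx> 8 log\<^sub>2 n\<close> moments and Markov's
  inequality at twice the mean gives the bound \<open>n\<^sup>-\<^sup>6\<close>.
\<close>

section \<open>The binomial random graph\<close>

lemma finite_Kn_edges [simp]: "finite (Kn_edges n)"
  by (rule finite_subset[of _ "Pow {..<n}"]) (auto simp: Kn_edges_def)

lemma set_pmf_Gnp: "set_pmf (Gnp n p) \<subseteq> Pow (Kn_edges n)"
  by (auto simp: Gnp_def)

lemma prob_Gnp_eq_sum: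
  "measure_pmf.prob (Gnp n p) A = (\<Sum>G\<in>A \<inter> Pow (Kn_edges n). pmf (Gnp n p) G)"
proof -
  have "A \<inter> set_pmf (Gnp n p) = (A \<inter> Pow (Kn_edges n)) \<inter> set_pmf (Gnp n p)"
    using set_pmf_Gnp by blast
  then have "measure_pmf.prob (Gnp n p) A = measure_pmf.prob (Gnp n p) (A \<inter> Pow (Kn_edges n))"
    by (metis measure_Int_set_pmf)
  also have "\<dots> = (\<Sum>G\<in>A \<inter> Pow (Kn_edges n). pmf (Gnp n p) G)"
    by (rule measure_measure_pmf_finite) auto
  finally show ?thesis .
qed

lemma prob_Gnp_superset:
  assumes "0 \<le> p" "p \<le> 1" "U \<subseteq> Kn_edges n"
  shows "measure_pmf.prob (Gnp n p) {G. U \<subseteq> G} = p ^ card U"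
proof -
  let ?K = "Kn_edges n"
  have "(\<lambda>X. {e \<in> ?K. X e}) -` {G. U \<subseteq> G} = Pi ?K (\<lambda>e. if e \<in> U then {True} else UNIV)"
    using assms(3) by (auto simp: Pi_def)
  then have "measure_pmf.prob (Gnp n p) {G. U \<subseteq> G} =
      measure_pmf.prob (Pi_pmf ?K False (\<lambda>_. bernoulli_pmf p)) (Pi ?K (\<lambda>e. if e \<in> U then {True} else UNIV))"
    by (simp add: Gnp_def)
  also have "\<dots> = (\<Prod>e\<in>?K. measure_pmf.prob (bernoulli_pmf p) (if e \<in> U then {True} else UNIV))"
    by (rule measure_Pi_pmf_Pi) simp
  also have "\<dots> = (\<Prod>e\<in>?K. if e \<in> U then p else 1)"
    using assms by (intro prod.cong) (auto simp: measure_pmf_single)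
  also have "\<dots> = p ^ card U"
    using assms(3) by (simp add: prod.If_cases Int_absorb1 finite_subset)
  finally show ?thesis .
qed

section \<open>Moments of the number of present members of a family\<close>

definition Gnp_moment :: "nat \<Rightarrow> real \<Rightarrow> nat set set set \<Rightarrow> nat \<Rightarrow> nat set set \<Rightarrow> real" where
  "Gnp_moment n p F k U =
     (\<Sum>G\<in>Pow (Kn_edges n). pmf (Gnp n p) G * real (card (hrestrict F G)) ^ k * of_bool (U \<subseteq> G))"

lemma Gnp_moment_0:
  assumes "0 \<le> p" "p \<le> 1" "U \<subseteq> Kn_edges n"
  shows "Gnp_moment n p F 0 U = p ^ card U"
proof -
  have "Gnp_moment n p F 0 U = (\<Sum>G\<in>{G. U \<subseteq> G} \<inter> Pow (Kn_edges n). pmf (Gnp n p) G)"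
    unfolding Gnp_moment_def by (rule sum.mono_neutral_cong_right) auto
  then show ?thesis
    using prob_Gnp_superset[OF assms] prob_Gnp_eq_sum by metis
qed

lemma card_hrestrict_eq_sum:
  "finite F \<Longrightarrow> real (card (hrestrict F G)) = (\<Sum>B\<in>F. of_bool (B \<subseteq> G))"
  by (simp add: hrestrict_def sum.inter_filter[symmetric] Int_def)

lemma Gnp_moment_Suc:
  assumes "finite F"
  shows "Gnp_moment n p F (Suc k) U = (\<Sum>B\<in>F. Gnp_moment n p F k (U \<union> B))"
proof -
  have "Gnp_moment n p F (Suc k) U =
      (\<Sum>G\<in>Pow (Kn_edges n). \<Sum>B\<in>F. pmf (Gnp n p) G * real (card (hrestrict F G)) ^ k * of_bool (U \<union> B \<subseteq> G))"
    unfolding Gnp_moment_def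
    by (intro sum.cong refl)
       (auto simp: card_hrestrict_eq_sum[OF assms] sum_distrib_left sum_distrib_right intro!: sum.cong)
  also have "\<dots> = (\<Sum>B\<in>F. Gnp_moment n p F k (U \<union> B))"
    unfolding Gnp_moment_def by (rule sum.swap)
  finally show ?thesis .
qed

lemma card_nonempty_subsets_le:
  assumes "finite U"
  shows "card {T. T \<subseteq> U \<and> T \<noteq> {} \<and> card T \<le> s} \<le> card U ^ s"
proof -
  let ?Lists = "{xs. set xs \<subseteq> U \<and> length xs = s}"
  have sub: "{T. T \<subseteq> U \<and> T \<noteq> {} \<and> card T \<le> s} \<subseteq> set ` ?Lists"
  proof
    fix T assume T: "T \<in> {T. T \<subseteq> U \<and> T \<noteq> {} \<and> card T \<le> s}"
    then obtain xs where xs: "set xs = T" "distinct xs"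
      using finite_distinct_list finite_subset[OF _ assms] by blast
    define ys where "ys = xs @ replicate (s - length xs) (hd xs)"
    have "set ys = T" "length ys = s"
      using T xs distinct_card[OF xs(2)] by (auto simp: ys_def)
    then show "T \<in> set ` ?Lists" using T by auto
  qed
  have "card {T. T \<subseteq> U \<and> T \<noteq> {} \<and> card T \<le> s} \<le> card (set ` ?Lists)"
    by (rule card_mono[OF finite_imageI sub]) (simp add: assms finite_lists_length_eq)
  also have "\<dots> \<le> card ?Lists"
    by (rule card_image_le) (simp add: assms finite_lists_length_eq)
  finally show ?thesis using assms by (simp add: card_lists_length_eq)
qed

lemma sum_power_card_Diff_le:
  fixes p M D :: real
  assumes p: "0 \<le> p" and F: "finite F" "\<And>B. B \<in> F \<Longrightarrow> finite B \<and> card B = s"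
    and M: "real (card F) * p ^ s \<le> M"
    and D: "\<And>T. T \<noteq> {} \<Longrightarrow> card T \<le> s \<Longrightarrow> real (card {B \<in> F. T \<subseteq> B}) * p ^ (s - card T) \<le> D"
    and "0 \<le> D" and U: "finite U"
  shows "(\<Sum>B\<in>F. p ^ card (B - U)) \<le> M + real (card U ^ s) * D"
proof -
  let ?F0 = "{B \<in> F. B \<inter> U = {}}" and ?F1 = "{B \<in> F. B \<inter> U \<noteq> {}}"
  let ?Traces = "{T. T \<subseteq> U \<and> T \<noteq> {} \<and> card T \<le> s}"
  have "(\<Sum>B\<in>?F0. p ^ card (B - U)) = real (card ?F0) * p ^ s"
    using F(2) by (simp add: Diff_triv)
  also have "\<dots> \<le> real (card F) * p ^ s"
    using p F(1) by (intro mult_right_mono of_nat_mono card_mono) auto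
  finally have F0: "(\<Sum>B\<in>?F0. p ^ card (B - U)) \<le> M" using M by linarith
  have traces: "(\<lambda>B. B \<inter> U) ` ?F1 \<subseteq> ?Traces"
    using F(2) by (auto intro: order_trans[OF card_mono])
  have "(\<Sum>B\<in>?F1. p ^ card (B - U)) = (\<Sum>T\<in>?Traces. \<Sum>B\<in>{B \<in> ?F1. B \<inter> U = T}. p ^ card (B - U))"
    using F(1) U traces by (intro sum.group[symmetric]) (auto intro: finite_subset[of _ "Pow U"])
  also have "\<dots> \<le> (\<Sum>T\<in>?Traces. D)"
  proof (rule sum_mono)
    fix T assume T: "T \<in> ?Traces"
    have "card (B - U) = s - card T" if "B \<in> F" "B \<inter> U = T" for B
    proof -
      have "card (B - U) = card B - card (B \<inter> U)"
        using F(2)[OF that(1)] by (intro card_Diff_subset_Int) simp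
      then show ?thesis using that F(2)[OF that(1)] by simp
    qed
    then have "(\<Sum>B\<in>{B \<in> ?F1. B \<inter> U = T}. p ^ card (B - U)) = real (card {B \<in> ?F1. B \<inter> U = T}) * p ^ (s - card T)"
      by simp
    also have "\<dots> \<le> real (card {B \<in> F. T \<subseteq> B}) * p ^ (s - card T)"
      using p F(1) by (intro mult_right_mono of_nat_mono card_mono) auto
    also have "\<dots> \<le> D"
      using T by (intro D) auto
    finally show "(\<Sum>B\<in>{B \<in> ?F1. B \<inter> U = T}. p ^ card (B - U)) \<le> D" .
  qed
  also have "\<dots> \<le> real (card U ^ s) * D"
    using \<open>0 \<le> D\<close> card_nonempty_subsets_le[OF U] by (simp add: mult_right_mono)
  finally have "(\<Sum>B\<in>?F1. p ^ card (B - U)) \<le> real (card U ^ s) * D" .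
  moreover have "(\<Sum>B\<in>F. p ^ card (B - U)) = (\<Sum>B\<in>?F0. p ^ card (B - U)) + (\<Sum>B\<in>?F1. p ^ card (B - U))"
    using F(1) by (subst sum.union_disjoint[symmetric]) (auto intro: sum.cong)
  ultimately show ?thesis using F0 by linarith
qed

lemma Gnp_moment_le:
  fixes p M D :: real
  assumes p: "0 \<le> p" "p \<le> 1" and F: "F \<subseteq> Pow (Kn_edges n)" "\<And>B. B \<in> F \<Longrightarrow> card B = s"
    and M: "real (card F) * p ^ s \<le> M"
    and D: "\<And>T. T \<noteq> {} \<Longrightarrow> card T \<le> s \<Longrightarrow> real (card {B \<in> F. T \<subseteq> B}) * p ^ (s - card T) \<le> D"
    and "0 \<le> D" and k: "k \<le> K" and U: "U \<subseteq> Kn_edges n" "card U \<le> (K - k) * s"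
  shows "Gnp_moment n p F k U \<le> (M + real ((K * s) ^ s) * D) ^ k * p ^ card U"
  using k U
proof (induction k arbitrary: U)
  case 0
  then show ?case using Gnp_moment_0 p by simp
next
  case (Suc k)
  let ?R = "M + real ((K * s) ^ s) * D"
  have fin: "finite F" "finite U"
    using F(1) Suc.prems(2) by (auto intro: finite_subset[of _ "Pow (Kn_edges n)"] finite_subset[of _ "Kn_edges n"])
  have finB: "finite B \<and> card B = s" if "B \<in> F" for B
    using F(1) that finite_subset[of B "Kn_edges n"] F(2)[OF that] by auto
  have "0 \<le> real (card F) * p ^ s" using p by simp
  then have R: "0 \<le> ?R" using M \<open>0 \<le> D\<close> by simp
  have "Gnp_moment n p F (Suc k) U = (\<Sum>B\<in>F. Gnp_moment n p F k (U \<union> B))"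
    by (rule Gnp_moment_Suc[OF fin(1)])
  also have "\<dots> \<le> (\<Sum>B\<in>F. ?R ^ k * p ^ card (U \<union> B))"
  proof (intro sum_mono Suc.IH)
    fix B assume "B \<in> F"
    then show "U \<union> B \<subseteq> Kn_edges n" using F Suc.prems by auto
    have "card (U \<union> B) \<le> card U + s" using card_Un_le[of U B] F(2)[OF \<open>B \<in> F\<close>] by simp
    also have "\<dots> \<le> (K - k) * s"
    proof -
      have "K - k = Suc (K - Suc k)" using Suc.prems(1) by simp
      then show ?thesis using Suc.prems(3) by simp
    qed
    finally show "card (U \<union> B) \<le> (K - k) * s" .
  qed (use Suc.prems in simp)
  also have "\<dots> = ?R ^ k * p ^ card U * (\<Sum>B\<in>F. p ^ card (B - U))"
  proof -
    have "card (U \<union> B) = card U + card (B - U)" if "B \<in> F" for B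
      using fin(2) finB[OF that] card_Un_disjoint[of U "B - U"] by simp
    then show ?thesis by (simp add: sum_distrib_left power_add mult.assoc)
  qed
  also have "\<dots> \<le> ?R ^ k * p ^ card U * (M + real (card U ^ s) * D)"
    using sum_power_card_Diff_le[OF p(1) fin(1) finB M D \<open>0 \<le> D\<close> fin(2)] R p by (intro mult_left_mono) auto
  also have "\<dots> \<le> ?R ^ k * p ^ card U * ?R"
  proof -
    have "card U \<le> K * s" using Suc.prems(3) by (meson diff_le_self le_trans mult_le_mono1)
    then have "real (card U ^ s) \<le> real ((K * s) ^ s)" by (intro of_nat_mono power_mono) auto
    then show ?thesis using R p \<open>0 \<le> D\<close> by (intro mult_left_mono add_left_mono mult_right_mono) auto
  qed
  finally show ?case by (simp add: algebra_simps)
qed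

lemma prob_Gnp_card_hrestrict_ge:
  fixes t :: real
  assumes "0 < t"
  shows "measure_pmf.prob (Gnp n p) {G. t \<le> real (card (hrestrict F G))} \<le> Gnp_moment n p F K {} / t ^ K"
proof -
  let ?X = "\<lambda>G. real (card (hrestrict F G))"
  have "measure_pmf.prob (Gnp n p) {G. t \<le> ?X G} = (\<Sum>G\<in>{G. t \<le> ?X G} \<inter> Pow (Kn_edges n). pmf (Gnp n p) G)"
    by (rule prob_Gnp_eq_sum)
  also have "\<dots> \<le> (\<Sum>G\<in>{G. t \<le> ?X G} \<inter> Pow (Kn_edges n). pmf (Gnp n p) G * (?X G / t) ^ K)"
  proof (rule sum_mono)
    fix G assume "G \<in> {G. t \<le> ?X G} \<inter> Pow (Kn_edges n)"
    then have "1 \<le> (?X G / t) ^ K" using assms by (intro one_le_power) simp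
    then show "pmf (Gnp n p) G \<le> pmf (Gnp n p) G * (?X G / t) ^ K"
      by (simp add: mult_le_cancel_left1)
  qed
  also have "\<dots> \<le> (\<Sum>G\<in>Pow (Kn_edges n). pmf (Gnp n p) G * (?X G / t) ^ K)"
    using assms by (intro sum_mono2) auto
  also have "\<dots> = Gnp_moment n p F K {} / t ^ K"
    by (simp add: Gnp_moment_def sum_divide_distrib power_divide)
  finally show ?thesis .
qed

lemma prob_Gnp_card_hrestrict_ge_twice:
  fixes p M c :: real
  assumes p: "0 \<le> p" "p \<le> 1" and F: "F \<subseteq> Pow (Kn_edges n)" "\<And>B. B \<in> F \<Longrightarrow> card B = s"
    and M: "real (card F) * p ^ s \<le> M" "0 < M"
    and D: "\<And>T. T \<noteq> {} \<Longrightarrow> card T \<le> s \<Longrightarrow> real (card {B \<in> F. T \<subseteq> B}) * p ^ (s - card T) \<le> c * M"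
    and "0 \<le> c"
  shows "measure_pmf.prob (Gnp n p) {G. 2 * M \<le> real (card (hrestrict F G))}
           \<le> ((1 + real ((K * s) ^ s) * c) / 2) ^ K"
proof -
  let ?X = "real ((K * s) ^ s)"
  have moment: "Gnp_moment n p F K {} \<le> (M + ?X * (c * M)) ^ K"
    using Gnp_moment_le[OF p F M(1) D, where k=K and K=K and U="{}"] M \<open>0 \<le> c\<close> by simp
  have "measure_pmf.prob (Gnp n p) {G. 2 * M \<le> real (card (hrestrict F G))} \<le> Gnp_moment n p F K {} / (2 * M) ^ K"
    using M by (intro prob_Gnp_card_hrestrict_ge) simp
  also have "\<dots> \<le> (M + ?X * (c * M)) ^ K / (2 * M) ^ K"
    using M by (intro divide_right_mono moment) simp
  also have "\<dots> = ((M + ?X * (c * M)) / (2 * M)) ^ K"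
    by (simp add: power_divide)
  also have "(M + ?X * (c * M)) / (2 * M) = (1 + ?X * c) / 2"
    using M by (simp add: field_simps)
  finally show ?thesis .
qed

section \<open>Choosing the moment order\<close>

lemma power_log_ceiling_le_powr:
  fixes x :: real
  assumes "0 \<le> x" "x \<le> 11/20" "1 \<le> n"
  shows "x ^ (8 * nat \<lceil>log 2 n\<rceil>) \<le> n powr -6"
proof -
  let ?L = "nat \<lceil>log 2 n\<rceil>"
  have "n = 2 powr log 2 n" using assms by simp
  also have "\<dots> \<le> 2 powr ?L" using assms by (intro powr_mono) linarith+
  finally have n: "n \<le> 2 ^ ?L" by (simp add: powr_realpow)
  have "x ^ (8 * ?L) = (x ^ 8) ^ ?L"
    by (simp add: power_mult)
  also have "\<dots> \<le> ((11/20) ^ 8) ^ ?L"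
    using assms by (intro power_mono) simp_all
  also have "\<dots> \<le> (1 / 64) ^ ?L"
    by (intro power_mono) (auto simp: power_numeral_reduce)
  also have "\<dots> = 1 / (2 ^ 6) ^ ?L"
    by (simp add: power_one_over)
  also have "(2 ^ 6 :: real) ^ ?L = (2 ^ ?L) ^ 6"
    by (metis power_mult mult.commute)
  also have "1 / (2 ^ ?L) ^ 6 \<le> 1 / n ^ 6"
    using n assms by (intro divide_left_mono power_mono mult_pos_pos) auto
  also have "\<dots> = n powr -6"
    using assms by (simp add: powr_neg_numeral)
  finally show ?thesis .
qed

lemma log_ceiling_le_powr:
  assumes "2 \<le> x" "0 < g"
  shows "real (nat \<lceil>log 2 x\<rceil>) \<le> 3 * x powr g / g"
proof -
  have "1 \<le> log 2 x" using assms by simp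
  then have "real (nat \<lceil>log 2 x\<rceil>) \<le> 2 * log 2 x" by linarith
  also have "\<dots> = 2 * (ln x / ln 2)" by (simp add: log_def)
  also have "\<dots> \<le> 2 * (ln x / (2/3))"
    using assms ln2_ge_two_thirds by (intro mult_left_mono divide_left_mono) auto
  also have "\<dots> \<le> 3 * x powr g / g"
    using ln_powr_bound[of x g] assms by simp
  finally show ?thesis .
qed

text \<open>A polylogarithmic moment order \<open>K \<approx> 8 log\<^sub>2 n\<close> suffices, since the codegree factor \<open>n\<^sup>-\<^sup>d\<close>
  absorbs \<open>(K s)\<^sup>s\<close>.\<close>
lemma exists_moment_order:
  fixes d C :: real
  assumes "0 < d" "0 \<le> C"
  shows "\<exists>N. \<forall>n\<ge>N. \<exists>K. ((1 + real ((K * s) ^ s) * C * real n powr (-d)) / 2) ^ K \<le> real n powr -6"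
proof -
  define g where "g = d / (2 * (real s + 1))"
  define A where "A = 24 * real s / g"
  have g: "0 < g" "g * real s \<le> d / 2"
    using assms by (auto simp: g_def field_simps)
  have A: "0 \<le> A" using g by (simp add: A_def)
  have "eventually (\<lambda>n. 10 * C * A ^ s \<le> real n powr (d / 2)) sequentially"
    using assms by real_asymp
  then obtain N where N: "\<And>n. N \<le> n \<Longrightarrow> 10 * C * A ^ s \<le> real n powr (d / 2)"
    by (auto simp: eventually_sequentially)
  have "\<exists>K. ((1 + real ((K * s) ^ s) * C * real n powr (-d)) / 2) ^ K \<le> real n powr -6"
    if n: "max 2 N \<le> n" for n
  proof -
    define K where "K = 8 * nat \<lceil>log 2 (real n)\<rceil>"
    have "real (K * s) = 8 * real (nat \<lceil>log 2 (real n)\<rceil>) * real s" by (simp add: K_def)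
    also have "\<dots> \<le> 8 * (3 * real n powr g / g) * real s"
      using log_ceiling_le_powr[of "real n" g] n g by (intro mult_right_mono) auto
    also have "\<dots> = A * real n powr g" by (simp add: A_def)
    finally have "real ((K * s) ^ s) \<le> (A * real n powr g) ^ s"
      by (metis of_nat_0_le_iff of_nat_power power_mono)
    also have "\<dots> = A ^ s * real n powr (g * real s)"
      using n by (simp add: power_mult_distrib powr_realpow [symmetric] powr_powr)
    also have "\<dots> \<le> A ^ s * real n powr (d / 2)"
      using n g A by (intro mult_left_mono powr_mono) auto
    finally have "real ((K * s) ^ s) * C * real n powr (-d) \<le> A ^ s * real n powr (d / 2) * C * real n powr (-d)"
      using assms by (simp add: mult_right_mono)
    also have "\<dots> = C * A ^ s / real n powr (d / 2)"
    proof -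
      have "real n powr d = real n powr (d / 2) * real n powr (d / 2)"
        by (simp flip: powr_add)
      then show ?thesis using n by (simp add: powr_minus field_simps)
    qed
    also have "\<dots> \<le> 1 / 10"
      using N[of n] n by (simp add: pos_divide_le_eq)
    finally have small: "real ((K * s) ^ s) * C * real n powr (-d) \<le> 1 / 10" .
    define X where "X = real ((K * s) ^ s) * C * real n powr (-d)"
    have X: "X \<le> 1 / 10" "0 \<le> X"
      unfolding X_def using small assms by simp_all
    have "((1 + X) / 2) ^ K \<le> real n powr -6"
      unfolding K_def using n X by (intro power_log_ceiling_le_powr) auto
    then show ?thesis unfolding X_def by blast
  qed
  then show ?thesis by blast
qed

section \<open>Strictly 2-balanced graphs\<close>

lemma card_Un_ge_3:
  assumes "card y1 = 2" "card y2 = 2" "y1 \<noteq> y2"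
  shows "3 \<le> card (y1 \<union> y2)"
proof -
  have fin: "finite y1" "finite y2" using assms by (auto intro: card_ge_0_finite)
  have "\<not> y2 \<subseteq> y1" using assms fin card_subset_eq by metis
  then have "card y1 < card (y1 \<union> y2)" using fin by (intro psubset_card_mono) auto
  then show ?thesis using assms by simp
qed

locale strictly_2_balanced_graph =
  fixes V :: "'a set" and E :: "'a set set"
  assumes strictly_2_balanced: "strictly_2_balanced V E"
begin

lemma finite_V: "finite V"
  and edge_subset: "y \<in> E \<Longrightarrow> y \<subseteq> V"
  and card_edge: "y \<in> E \<Longrightarrow> card y = 2"
  and card_E_ge_2: "2 \<le> card E"
  using strictly_2_balanced by (auto simp: strictly_2_balanced_def simple_graph_def)

lemma finite_E: "finite E"
  using finite_V edge_subset by (meson Pow_iff finite_Pow_iff finite_subset subsetI)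

lemma finite_edge: "y \<in> E \<Longrightarrow> finite y"
  using card_edge by (metis card.infinite zero_neq_numeral)

lemma two_edgesE:
  obtains h1 h2 where "h1 \<in> E" "h2 \<in> E" "h1 \<noteq> h2"
  using card_le_Suc0_iff_eq[OF finite_E] card_E_ge_2 by fastforce

lemma finite_subgraphs2: "finite (subgraphs2 V E)"
  by (rule finite_subset[of _ "Pow V \<times> Pow E"]) (auto simp: subgraphs2_def finite_V finite_E)

lemma d2_less_m2:
  assumes "(VF, EF) \<in> subgraphs2 V E" "(VF, EF) \<noteq> (V, E)"
  shows "d2 VF EF < m2 V E"
proof -
  have "d2 VF EF \<le> m2 V E"
    unfolding m2_def using assms(1) finite_subgraphs2 by (intro Max_ge) force+
  then show ?thesis
    using assms strictly_2_balanced unfolding strictly_2_balanced_def by fastforce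
qed

lemma m2_eq_d2: "m2 V E = d2 V E"
proof -
  have "(V, E) \<in> subgraphs2 V E"
    using edge_subset card_E_ge_2 by (auto simp: subgraphs2_def)
  then have "m2 V E \<in> (\<lambda>(VF, EF). d2 VF EF) ` subgraphs2 V E"
    unfolding m2_def using finite_subgraphs2 by (intro Max_in) auto
  then show ?thesis using d2_less_m2 by fastforce
qed

lemma card_V_ge_3: "3 \<le> card V"
proof -
  obtain h1 h2 where "h1 \<in> E" "h2 \<in> E" "h1 \<noteq> h2" by (rule two_edgesE)
  then have "3 \<le> card (h1 \<union> h2)" by (intro card_Un_ge_3 card_edge)
  also have "\<dots> \<le> card V" using \<open>h1 \<in> E\<close> \<open>h2 \<in> E\<close> by (intro card_mono finite_V) (auto dest: edge_subset)
  finally show ?thesis .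
qed

lemma m2_pos: "0 < m2 V E"
  using m2_eq_d2 card_V_ge_3 card_E_ge_2 by (simp add: d2_def)

lemma proper_subgraph_density:
  assumes "EF \<subseteq> E" "EF \<noteq> E" "2 \<le> card EF"
  shows "real (card EF) - 1 < m2 V E * (real (card (\<Union>EF)) - 2)"
proof -
  have "(\<Union>EF, EF) \<in> subgraphs2 V E"
    using assms edge_subset by (auto simp: subgraphs2_def)
  then have "(real (card EF) - 1) / (real (card (\<Union>EF)) - 2) < m2 V E"
    using d2_less_m2 assms(2) by (fastforce simp: d2_def)
  moreover have "3 \<le> card (\<Union>EF)"
  proof -
    obtain h1 h2 where h: "h1 \<in> EF" "h2 \<in> EF" "h1 \<noteq> h2"
      using card_le_Suc0_iff_eq[of EF] assms(3) by (fastforce dest: card_ge_0_finite)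
    then have "3 \<le> card (h1 \<union> h2)" using assms(1) by (intro card_Un_ge_3 card_edge) auto
    also have "\<dots> \<le> card (\<Union>EF)"
    proof (rule card_mono)
      show "finite (\<Union>EF)" using assms(1) edge_subset finite_V by (meson Union_least finite_subset subsetD)
    qed (use h in blast)
    finally show ?thesis .
  qed
  ultimately show ?thesis by (simp add: divide_less_eq mult.commute)
qed

lemma link_density:
  assumes "eH \<in> E" "gH \<in> E" "eH \<noteq> gH" "TH \<subseteq> E - {eH, gH}" "TH \<noteq> {}"
  shows "real (card TH) < m2 V E * (real (card (\<Union>TH \<union> eH)) - 2)"
proof -
  have "finite TH" "eH \<notin> TH" using assms(4) finite_E by (auto intro: finite_subset)
  then have "card (insert eH TH) = card TH + 1" "1 \<le> card TH"
    using assms(5) by (auto simp: Suc_le_eq card_gt_0_iff)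
  moreover have "insert eH TH \<noteq> E" "TH \<subseteq> E" using assms by auto
  ultimately show ?thesis
    using proper_subgraph_density[of "insert eH TH"] assms(1) by (simp add: Un_commute)
qed

lemma m2_gt_1:
  assumes "3 \<le> card E"
  shows "1 < m2 V E"
proof -
  have density_pair: "1 < m2 V E * (real (card (h1 \<union> h2)) - 2)"
    if "h1 \<in> E" "h2 \<in> E" "h1 \<noteq> h2" for h1 h2
  proof -
    have "card {h1, h2} = 2" using that by simp
    then have "{h1, h2} \<noteq> E" using assms by auto
    then show ?thesis using proper_subgraph_density[of "{h1, h2}"] that by simp
  qed
  show ?thesis
  proof (cases "\<exists>h1\<in>E. \<exists>h2\<in>E. h1 \<noteq> h2 \<and> h1 \<inter> h2 \<noteq> {}")
    case True
    then obtain h1 h2 where h: "h1 \<in> E" "h2 \<in> E" "h1 \<noteq> h2" "h1 \<inter> h2 \<noteq> {}" by blast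
    have "card (h1 \<union> h2) + card (h1 \<inter> h2) = 4"
      using card_Un_Int[of h1 h2] h card_edge finite_edge by simp
    moreover have "card (h1 \<inter> h2) \<noteq> 0" using h finite_edge by simp
    moreover have "3 \<le> card (h1 \<union> h2)" using h by (intro card_Un_ge_3 card_edge)
    ultimately have "card (h1 \<union> h2) = 3" by linarith
    then show ?thesis using density_pair[OF h(1-3)] by simp
  next
    case False
    \<comment> \<open>then \<open>H\<close> is a matching, of density \<open>1/2\<close> at most, but two of its edges already have density \<open>1/2\<close>\<close>
    obtain h1 h2 where h: "h1 \<in> E" "h2 \<in> E" "h1 \<noteq> h2" by (rule two_edgesE)
    have "card (h1 \<union> h2) = 4"
      using False h card_edge finite_edge by (subst card_Un_disjoint) auto
    then have "1 / 2 < m2 V E" using density_pair[OF h] by simp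
    have "card (\<Union>E) = (\<Sum>y\<in>E. card y)"
      using False finite_E finite_edge by (intro card_Union_disjoint) (auto simp: pairwise_def disjnt_def)
    also have "\<dots> = 2 * card E" using card_edge by simp
    finally have "2 * card E \<le> card V"
      using finite_V edge_subset card_mono[of V "\<Union>E"] by auto
    then have "m2 V E \<le> 1 / 2"
      using m2_eq_d2 card_E_ge_2 by (simp add: d2_def divide_le_eq)
    with \<open>1 / 2 < m2 V E\<close> show ?thesis by simp
  qed
qed

lemma vertex_density:
  assumes "1 < m2 V E" "gH \<in> E" "TH \<subseteq> E - {gH}" "TH \<noteq> {}" "x \<in> V"
  shows "real (card TH) < m2 V E * (real (card (\<Union>TH \<union> {x})) - 1)"
proof -
  have "TH \<subseteq> E" using assms(3) by blast
  then have "\<Union>TH \<union> {x} \<subseteq> V" using assms(5) edge_subset by blast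
  then have fin: "finite TH" "finite (\<Union>TH \<union> {x})"
    using \<open>TH \<subseteq> E\<close> finite_E finite_V by (auto intro: finite_subset)
  obtain y where y: "y \<in> TH" using assms(4) by auto
  show ?thesis
  proof (cases "card TH = 1")
    case True
    have "card y \<le> card (\<Union>TH \<union> {x})" using y fin by (intro card_mono) auto
    then have "1 \<le> real (card (\<Union>TH \<union> {x})) - 1" using y assms(3) card_edge by fastforce
    then have "m2 V E * 1 \<le> m2 V E * (real (card (\<Union>TH \<union> {x})) - 1)"
      using assms(1) by (intro mult_left_mono) auto
    then show ?thesis using assms(1) True by linarith
  next
    case False
    then have "2 \<le> card TH" using fin(1) assms(4) by (metis One_nat_def card_0_eq less_2_cases not_less)
    moreover have "TH \<noteq> E" using assms by auto
    ultimately have dens: "real (card TH) - 1 < m2 V E * (real (card (\<Union>TH)) - 2)"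
      using proper_subgraph_density assms(3) by auto
    have "card (\<Union>TH) \<le> card (\<Union>TH \<union> {x})" using fin by (intro card_mono) auto
    then have "m2 V E * real (card (\<Union>TH)) \<le> m2 V E * real (card (\<Union>TH \<union> {x}))"
      using assms(1) by (intro mult_left_mono) auto
    then show ?thesis using dens assms(1) unfolding right_diff_distrib by linarith
  qed
qed

end

text \<open>The exponent of the uniform codegree gain; it is positive as only finitely many values occur.\<close>
definition density_gap :: "'a set \<Rightarrow> 'a set set \<Rightarrow> real" where
  "density_gap V E = Min (insert 1 {x. \<exists>w c t. w \<le> card V \<and> c \<le> card V \<and> t \<le> card E \<and>
      x = real w - real c - real t / m2 V E \<and> 0 < x})"

lemma density_gap_bounds:
  shows "0 < density_gap V E" "density_gap V E \<le> 1"
    and "w \<le> card V \<Longrightarrow> c \<le> card V \<Longrightarrow> t \<le> card E \<Longrightarrow> 0 < real w - real c - real t / m2 V E \<Longrightarrow>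
         density_gap V E \<le> real w - real c - real t / m2 V E"
proof -
  let ?S = "{x. \<exists>w c t. w \<le> card V \<and> c \<le> card V \<and> t \<le> card E \<and>
      x = real w - real c - real t / m2 V E \<and> 0 < x}"
  have "?S \<subseteq> (\<lambda>(w, c, t). real w - real c - real t / m2 V E) ` ({..card V} \<times> {..card V} \<times> {..card E})"
    by force
  then have fin: "finite (insert 1 ?S)" by (auto intro: finite_subset)
  show "0 < density_gap V E" "density_gap V E \<le> 1"
    unfolding density_gap_def using fin by auto
  show "density_gap V E \<le> real w - real c - real t / m2 V E"
    if "w \<le> card V" "c \<le> card V" "t \<le> card E" "0 < real w - real c - real t / m2 V E"
    unfolding density_gap_def using fin that by (intro Min_le) blast+
qed

text \<open>The expected number of extensions of a \<open>t\<close>-edge, \<open>w\<close>-vertex configuration, compared with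
  the mean \<open>n\<^sup>v\<^sup>-\<^sup>c p\<^sup>s\<close>, for \<open>p \<ge> n\<^sup>-\<^sup>1\<^sup>/\<^sup>m\<close>.\<close>
lemma power_ratio_le_powr:
  fixes m p d :: real
  assumes m: "0 < m" and n: "1 \<le> real n" and p: "0 < p" "real n powr (-1 / m) \<le> p"
    and "t \<le> s" "c \<le> w" "w \<le> v" and d: "d \<le> real w - real c - real t / m"
  shows "real n ^ (v - w) * p ^ (s - t) \<le> real n powr (-d) * (real n ^ (v - c) * p ^ s)"
proof -
  have "real n powr (- (real t / m)) = (real n powr (-1 / m)) ^ t"
    using n by (simp add: powr_realpow[symmetric] powr_powr)
  also have "\<dots> \<le> p ^ t" using p n by (intro power_mono) auto
  finally have "p ^ (s - t) \<le> p ^ s * real n powr (real t / m)"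
    using p n \<open>t \<le> s\<close> by (simp add: power_diff powr_minus field_simps)
  then have "real n ^ (v - w) * p ^ (s - t) \<le> real n ^ (v - w) * (p ^ s * real n powr (real t / m))"
    by (intro mult_left_mono) auto
  also have "\<dots> = real n powr (real v - real w + real t / m) * p ^ s"
    using n \<open>w \<le> v\<close> by (simp add: powr_realpow[symmetric] powr_add of_nat_diff)
  also have "\<dots> \<le> real n powr (-d + (real v - real c)) * p ^ s"
    using n d p by (intro mult_right_mono powr_mono) auto
  also have "\<dots> = real n powr (-d) * (real n ^ (v - c) * p ^ s)"
  proof -
    have "real n powr (real v - real c) = real n ^ (v - c)"
      using n \<open>c \<le> w\<close> \<open>w \<le> v\<close> by (simp add: powr_realpow[symmetric] of_nat_diff)
    then show ?thesis by (simp only: powr_add mult.assoc)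
  qed
  finally show ?thesis .
qed

section \<open>Rooted images of embeddings\<close>

lemma card_PiE_restrict_le:
  assumes "finite V" "W \<subseteq> V" "finite \<Psi>" "finite X"
  shows "card {h \<in> V \<rightarrow>\<^sub>E X. restrict h W \<in> \<Psi>} \<le> card \<Psi> * card X ^ (card V - card W)"
proof -
  let ?A = "{h \<in> V \<rightarrow>\<^sub>E X. restrict h W \<in> \<Psi>}"
  let ?split = "\<lambda>h. (restrict h W, restrict h (V - W))"
  have "inj_on ?split ?A"
  proof (rule inj_onI)
    fix h1 h2 assume h: "h1 \<in> ?A" "h2 \<in> ?A" "?split h1 = ?split h2"
    show "h1 = h2"
    proof (rule PiE_ext)
      fix x assume "x \<in> V"
      then show "h1 x = h2 x"
        using h(3) by (cases "x \<in> W") (auto dest!: fun_cong[of _ _ x])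
    qed (use h in auto)
  qed
  then have "card ?A = card (?split ` ?A)" by (rule card_image[symmetric])
  also have "\<dots> \<le> card (\<Psi> \<times> (V - W \<rightarrow>\<^sub>E X))"
    using assms by (intro card_mono finite_cartesian_product finite_PiE) auto
  also have "\<dots> = card \<Psi> * card X ^ (card V - card W)"
    using assms by (simp add: card_cartesian_product card_funcsetE card_Diff_subset finite_subset)
  finally show ?thesis .
qed

lemma card_image_subset_extensions_le:
  assumes "finite V" "W \<subseteq> V" "finite S"
  shows "card {h \<in> V \<rightarrow>\<^sub>E {..<n}. h ` W \<subseteq> S} \<le> card S ^ card W * n ^ (card V - card W)"
proof -
  have "{h \<in> V \<rightarrow>\<^sub>E {..<n}. h ` W \<subseteq> S} = {h \<in> V \<rightarrow>\<^sub>E {..<n}. restrict h W \<in> W \<rightarrow>\<^sub>E S}"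
    by (auto simp: image_subset_iff_funcset)
  also have "card \<dots> \<le> card (W \<rightarrow>\<^sub>E S) * card {..<n} ^ (card V - card W)"
    using assms by (intro card_PiE_restrict_le finite_PiE) (auto intro: finite_subset)
  finally show ?thesis
    using assms by (simp add: card_funcsetE finite_subset)
qed

definition rooted_images ::
  "'a set \<Rightarrow> 'a set set \<Rightarrow> nat \<Rightarrow> ('a set \<times> 'a set set) set \<Rightarrow> nat set \<Rightarrow> nat set set set" where
  "rooted_images V E n \<A> P = {(\<lambda>y. f ` y) ` (E - R) | f Z R.
     f \<in> V \<rightarrow>\<^sub>E {..<n} \<and> inj_on f V \<and> (Z, R) \<in> \<A> \<and> f ` Z \<subseteq> P}"

definition edge_roots :: "'a set set \<Rightarrow> ('a set \<times> 'a set set) set" where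
  "edge_roots E = {(eH, {eH, gH}) | eH gH. eH \<in> E \<and> gH \<in> E \<and> eH \<noteq> gH}"

definition vertex_roots :: "'a set \<Rightarrow> 'a set set \<Rightarrow> ('a set \<times> 'a set set) set" where
  "vertex_roots V E = {({x}, {gH}) | x gH. x \<in> V \<and> gH \<in> E}"

lemma card_edge_roots: "finite E \<Longrightarrow> card (edge_roots E) \<le> card E ^ 2"
proof -
  assume "finite E"
  have "edge_roots E \<subseteq> (\<lambda>(eH, gH). (eH, {eH, gH})) ` (E \<times> E)"
    by (auto simp: edge_roots_def)
  then have "card (edge_roots E) \<le> card (E \<times> E)"
    using \<open>finite E\<close> by (meson card_image_le card_mono finite_SigmaI finite_imageI order_trans)
  then show ?thesis by (simp add: card_cartesian_product power2_eq_square)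
qed

lemma card_vertex_roots: "finite V \<Longrightarrow> finite E \<Longrightarrow> card (vertex_roots V E) \<le> card V * card E"
proof -
  assume "finite V" "finite E"
  have "vertex_roots V E = (\<lambda>(x, gH). ({x}, {gH})) ` (V \<times> E)"
    by (auto simp: vertex_roots_def)
  then show ?thesis
    using card_image_le[of "V \<times> E" "\<lambda>(x, gH). ({x}, {gH})"] \<open>finite V\<close> \<open>finite E\<close>
    by (simp add: card_cartesian_product)
qed

lemma finite_edge_roots: "finite E \<Longrightarrow> finite (edge_roots E)"
  by (rule finite_subset[of _ "E \<times> Pow E"]) (auto simp: edge_roots_def)

lemma finite_vertex_roots: "finite V \<Longrightarrow> finite E \<Longrightarrow> finite (vertex_roots V E)"
  by (rule finite_subset[of _ "Pow V \<times> Pow E"]) (auto simp: vertex_roots_def)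

definition root_configurations ::
  "'a set set \<Rightarrow> ('a set \<times> 'a set set) set \<Rightarrow> nat \<Rightarrow> ('a set \<times> 'a set set \<times> 'a set set) set" where
  "root_configurations E \<A> t = {(Z, R, TH). (Z, R) \<in> \<A> \<and> TH \<subseteq> E - R \<and> TH \<noteq> {} \<and> card TH = t}"

lemma root_configurations_subset: "root_configurations E \<A> t \<subseteq> (\<lambda>((Z, R), TH). (Z, R, TH)) ` (\<A> \<times> Pow E)"
proof
  fix c assume "c \<in> root_configurations E \<A> t"
  then obtain Z R TH where "c = (Z, R, TH)" "(Z, R) \<in> \<A>" "TH \<subseteq> E - R"
    by (auto simp: root_configurations_def)
  then show "c \<in> (\<lambda>((Z, R), TH). (Z, R, TH)) ` (\<A> \<times> Pow E)"
    by (intro image_eqI[of _ _ "((Z, R), TH)"]) auto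
qed

lemma finite_root_configurations: "finite \<A> \<Longrightarrow> finite E \<Longrightarrow> finite (root_configurations E \<A> t)"
  using root_configurations_subset by (rule finite_subset) simp

lemma card_root_configurations_le:
  assumes "finite \<A>" "finite E"
  shows "card (root_configurations E \<A> t) \<le> card \<A> * 2 ^ card E"
proof -
  have "card (root_configurations E \<A> t) \<le> card ((\<lambda>((Z, R), TH). (Z, R, TH)) ` (\<A> \<times> Pow E))"
    using assms by (intro card_mono[OF _ root_configurations_subset]) auto
  also have "\<dots> \<le> card (\<A> \<times> Pow E)" by (rule card_image_le) (use assms in simp)
  finally show ?thesis using assms by (simp add: card_cartesian_product card_Pow)
qed

context strictly_2_balanced_graph
begin

lemma inj_on_image_edges: "inj_on f V \<Longrightarrow> inj_on (\<lambda>y. f ` y) E"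
  using edge_subset by (auto simp: inj_on_def inj_on_image_eq_iff)

lemma image_edge_in_Kn_edges:
  assumes "f ` V \<subseteq> {..<n}" "inj_on f V" "y \<in> E"
  shows "f ` y \<in> Kn_edges n"
  using assms edge_subset[OF assms(3)] card_edge[OF assms(3)]
  by (auto simp: Kn_edges_def card_image inj_on_subset)

lemma rooted_images_subset_Pow: "rooted_images V E n \<A> P \<subseteq> Pow (Kn_edges n)"
  by (auto simp: rooted_images_def PiE_def intro!: image_edge_in_Kn_edges)

lemma card_rooted_image:
  assumes "B \<in> rooted_images V E n \<A> P" "\<And>Z R. (Z, R) \<in> \<A> \<Longrightarrow> R \<subseteq> E \<and> card R = r"
  shows "card B = card E - r"
proof -
  obtain f Z R where f: "inj_on f V" "(Z, R) \<in> \<A>" "B = (\<lambda>y. f ` y) ` (E - R)"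
    using assms(1) by (auto simp: rooted_images_def)
  then have "card B = card (E - R)"
    using inj_on_image_edges by (metis Diff_subset card_image inj_on_subset)
  moreover have "R \<subseteq> E" "card R = r" using assms(2)[OF f(2)] by auto
  ultimately show ?thesis using finite_E by (simp add: card_Diff_subset finite_subset)
qed

lemma rooted_imageI:
  assumes "f ` V \<subseteq> {..<n}" "inj_on f V" "(Z, R) \<in> \<A>" "f ` Z \<subseteq> P" "Z \<subseteq> V" "R \<subseteq> E"
  shows "(\<lambda>y. f ` y) ` (E - R) \<in> rooted_images V E n \<A> P"
proof -
  have "(\<lambda>y. f ` y) ` (E - R) = (\<lambda>y. restrict f V ` y) ` (E - R)"
    using edge_subset by (intro image_cong refl) (auto simp: image_def)
  moreover have "restrict f V \<in> V \<rightarrow>\<^sub>E {..<n}" "inj_on (restrict f V) V" "restrict f V ` Z \<subseteq> P"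
    using assms(1,2,4,5) by auto
  ultimately show ?thesis
    unfolding rooted_images_def using assms(3) by blast
qed

lemma link_shadow_subset_rooted_images:
  "hshadow (hlink (copies V E n) e) \<subseteq> rooted_images V E n (edge_roots E) e"
proof
  fix B assume "B \<in> hshadow (hlink (copies V E n) e)"
  then obtain A g where A: "A \<in> copies V E n" "e \<in> A" "g \<in> A" "g \<noteq> e" and B: "B = A - {e, g}"
    unfolding hshadow_def hlink_def by blast
  then obtain f where f: "inj_on f V" "f ` V \<subseteq> {..<n}" "A = (\<lambda>y. f ` y) ` E"
    unfolding copies_def by blast
  then obtain eH gH where "eH \<in> E" "gH \<in> E" "e = f ` eH" "g = f ` gH" "eH \<noteq> gH"
    using A by blast
  moreover from this have "B = (\<lambda>y. f ` y) ` (E - {eH, gH})"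
    using B f inj_on_image_edges[OF f(1)] by (simp add: inj_on_image_set_diff)
  ultimately show "B \<in> rooted_images V E n (edge_roots E) e"
    using f edge_subset by (auto simp: edge_roots_def intro!: rooted_imageI)
qed

lemma vertex_shadow_subset_rooted_images:
  "hshadow (copies_at V E n v) \<subseteq> rooted_images V E n (vertex_roots V E) {v}"
proof
  fix B assume "B \<in> hshadow (copies_at V E n v)"
  then obtain A g where A: "A \<in> copies V E n" "v \<in> \<Union>A" "g \<in> A" and B: "B = A - {g}"
    unfolding hshadow_def hlink_def copies_at_def by blast
  then obtain f where f: "inj_on f V" "f ` V \<subseteq> {..<n}" "A = (\<lambda>y. f ` y) ` E"
    unfolding copies_def by blast
  then obtain x gH where "x \<in> V" "f x = v" "gH \<in> E" "g = f ` gH"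
    using A edge_subset by blast
  moreover from this have "B = (\<lambda>y. f ` y) ` (E - {gH})"
    using B f inj_on_image_edges[OF f(1)] by (simp add: inj_on_image_set_diff)
  ultimately show "B \<in> rooted_images V E n (vertex_roots V E) {v}"
    using f edge_subset by (auto simp: vertex_roots_def intro!: rooted_imageI)
qed

lemma card_rooted_images_le:
  assumes "finite \<A>" "\<And>Z R. (Z, R) \<in> \<A> \<Longrightarrow> Z \<subseteq> V \<and> card Z = card P" "finite P"
  shows "card (rooted_images V E n \<A> P) \<le> card \<A> * fact (card P) * n ^ (card V - card P)"
proof -
  define Ext where "Ext Z = {h \<in> V \<rightarrow>\<^sub>E {..<n}. restrict h Z \<in> {\<phi> \<in> Z \<rightarrow>\<^sub>E P. inj_on \<phi> Z}}" for Z
  let ?img = "\<lambda>R h. (\<lambda>y. h ` y) ` (E - R)"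
  have finite_Ext: "finite (Ext Z)" for Z
    unfolding Ext_def by (rule finite_subset[of _ "V \<rightarrow>\<^sub>E {..<n}"]) (auto intro: finite_PiE finite_V)
  have "rooted_images V E n \<A> P \<subseteq> (\<Union>c\<in>\<A>. ?img (snd c) ` Ext (fst c))"
  proof
    fix B assume "B \<in> rooted_images V E n \<A> P"
    then obtain f Z R where f: "f \<in> V \<rightarrow>\<^sub>E {..<n}" "inj_on f V" "(Z, R) \<in> \<A>" "f ` Z \<subseteq> P"
      and B: "B = ?img R f"
      unfolding rooted_images_def by blast
    then have "f \<in> Ext Z"
      using assms(2)[OF f(3)] unfolding Ext_def by (auto simp: inj_on_def subset_eq)
    then have "B \<in> ?img (snd (Z, R)) ` Ext (fst (Z, R))" using B by simp
    then show "B \<in> (\<Union>c\<in>\<A>. ?img (snd c) ` Ext (fst c))" using f(3) by (rule UN_I[rotated])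
  qed
  then have "card (rooted_images V E n \<A> P) \<le> card (\<Union>c\<in>\<A>. ?img (snd c) ` Ext (fst c))"
    using assms(1) finite_Ext by (intro card_mono) auto
  also have "\<dots> \<le> (\<Sum>c\<in>\<A>. card (?img (snd c) ` Ext (fst c)))"
    using assms(1) by (rule card_UN_le)
  also have "\<dots> \<le> (\<Sum>c\<in>\<A>. fact (card P) * n ^ (card V - card P))"
  proof (intro sum_mono)
    fix c assume "c \<in> \<A>"
    then obtain Z R where c: "c = (Z, R)" "(Z, R) \<in> \<A>" by (cases c) auto
    then have Z: "Z \<subseteq> V" "card Z = card P" using assms(2) by auto
    let ?\<Psi> = "{\<phi> \<in> Z \<rightarrow>\<^sub>E P. inj_on \<phi> Z}"
    have "card ?\<Psi> = fact (card P)"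
      using card_inj_on_subset_funcset[of Z P Z] Z finite_V assms(3)
      by (simp add: fact_prod_rev finite_subset)
    moreover have "finite ?\<Psi>"
      using Z(1) finite_V assms(3) by (simp add: finite_PiE finite_subset)
    then have "card (Ext Z) \<le> card ?\<Psi> * card {..<n} ^ (card V - card Z)"
      unfolding Ext_def by (rule card_PiE_restrict_le[OF finite_V Z(1)]) simp
    ultimately have "card (Ext Z) \<le> fact (card P) * n ^ (card V - card P)"
      using Z(2) by simp
    moreover have "card (?img R ` Ext Z) \<le> card (Ext Z)"
      by (rule card_image_le[OF finite_Ext])
    ultimately show "card (?img (snd c) ` Ext (fst c)) \<le> fact (card P) * n ^ (card V - card P)"
      unfolding c by simp
  qed
  finally show ?thesis by simp
qed

lemma rooted_image_supersetE:
  assumes "B \<in> rooted_images V E n \<A> P" "T \<subseteq> B"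
  obtains f Z R TH where "f \<in> V \<rightarrow>\<^sub>E {..<n}" "(Z, R) \<in> \<A>" "TH \<subseteq> E - R" "card TH = card T"
    "f ` (\<Union>TH \<union> Z) \<subseteq> \<Union>T \<union> P" "B = (\<lambda>y. f ` y) ` (E - R)"
proof -
  obtain f Z R where f: "f \<in> V \<rightarrow>\<^sub>E {..<n}" "inj_on f V" "(Z, R) \<in> \<A>" "f ` Z \<subseteq> P"
    and B: "B = (\<lambda>y. f ` y) ` (E - R)"
    using assms(1) unfolding rooted_images_def by blast
  define TH where "TH = {y \<in> E - R. f ` y \<in> T}"
  have image_TH: "(\<lambda>y. f ` y) ` TH = T"
    using assms(2) B unfolding TH_def by blast
  have "inj_on (\<lambda>y. f ` y) TH"
    using inj_on_image_edges[OF f(2)] by (rule inj_on_subset) (auto simp: TH_def)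
  then have "card TH = card T" using image_TH card_image by fastforce
  moreover have "f ` (\<Union>TH \<union> Z) \<subseteq> \<Union>T \<union> P"
    using image_TH f(4) by blast
  moreover have "TH \<subseteq> E - R" by (auto simp: TH_def)
  ultimately show ?thesis using that f(1,3) B by blast
qed

lemma extension_power_le:
  assumes "TH \<subseteq> E" "Z \<subseteq> V" "TH \<noteq> {}" "card TH \<le> s"
    and dense: "real (card TH) < m2 V E * (real (card (\<Union>TH \<union> Z)) - real c)"
    and n: "1 \<le> real n" and p: "0 < p" "real n powr (-1 / m2 V E) \<le> p"
  shows "real n ^ (card V - card (\<Union>TH \<union> Z)) * p ^ (s - card TH)
           \<le> real n powr (- density_gap V E) * (real n ^ (card V - c) * p ^ s)"
proof (rule power_ratio_le_powr[OF m2_pos n p \<open>card TH \<le> s\<close>])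
  let ?w = "card (\<Union>TH \<union> Z)"
  have "finite TH" using assms(1) finite_E by (rule finite_subset)
  then have "0 < real (card TH)" using assms(3) by auto
  then have pos: "0 < real ?w - real c - real (card TH) / m2 V E"
    using dense m2_pos by (simp add: field_simps)
  moreover have "0 \<le> real (card TH) / m2 V E" using m2_pos by simp
  ultimately have "real c < real ?w" by linarith
  then show "c \<le> ?w" by simp
  show "?w \<le> card V"
    using assms(1,2) edge_subset by (intro card_mono finite_V) auto
  then show "density_gap V E \<le> real ?w - real c - real (card TH) / m2 V E"
    using pos \<open>c \<le> ?w\<close> assms(1) finite_E by (intro density_gap_bounds(3)) (auto intro: card_mono)
qed

lemma card_Union_le_twice: "T \<subseteq> Kn_edges n \<Longrightarrow> card (\<Union>T) \<le> 2 * card T"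
  using card_Union_le_sum_card[of T] by (simp add: Kn_edges_def subset_eq)

lemma card_rooted_supersets_le:
  assumes "finite \<A>" "T \<noteq> {}" "finite T"
  shows "card {B \<in> rooted_images V E n \<A> P. T \<subseteq> B}
    \<le> (\<Sum>(Z, R, TH)\<in>root_configurations E \<A> (card T). card {h \<in> V \<rightarrow>\<^sub>E {..<n}. h ` (\<Union>TH \<union> Z) \<subseteq> \<Union>T \<union> P})"
    (is "card ?L \<le> (\<Sum>(Z, R, TH)\<in>?C. card (?Ext Z TH))")
proof -
  let ?img = "\<lambda>R h. (\<lambda>y. h ` y) ` (E - R)"
  have "?L \<subseteq> (\<Union>(Z, R, TH)\<in>?C. ?img R ` ?Ext Z TH)"
  proof
    fix B assume "B \<in> ?L"
    then have "B \<in> rooted_images V E n \<A> P" "T \<subseteq> B" by auto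
    then obtain f Z R TH where f: "f \<in> V \<rightarrow>\<^sub>E {..<n}" "(Z, R) \<in> \<A>" "TH \<subseteq> E - R" "card TH = card T"
      "f ` (\<Union>TH \<union> Z) \<subseteq> \<Union>T \<union> P" "B = ?img R f"
      by (rule rooted_image_supersetE)
    then have "(Z, R, TH) \<in> ?C" using assms(2,3) by (auto simp: root_configurations_def)
    moreover have "B \<in> (\<lambda>(Z, R, TH). ?img R ` ?Ext Z TH) (Z, R, TH)"
      using f(1,5) unfolding f(6) by (auto intro: rev_image_eqI)
    ultimately show "B \<in> (\<Union>(Z, R, TH)\<in>?C. ?img R ` ?Ext Z TH)" by (rule UN_I)
  qed
  moreover have finite_Ext: "finite (?Ext Z TH)" for Z TH
    by (rule finite_subset[of _ "V \<rightarrow>\<^sub>E {..<n}"]) (auto intro: finite_PiE finite_V)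
  moreover have "finite ?C" using assms(1) finite_E by (rule finite_root_configurations)
  ultimately have "card ?L \<le> card (\<Union>(Z, R, TH)\<in>?C. ?img R ` ?Ext Z TH)"
    by (intro card_mono) auto
  also have "\<dots> \<le> (\<Sum>c\<in>?C. card ((\<lambda>(Z, R, TH). ?img R ` ?Ext Z TH) c))"
    using \<open>finite ?C\<close> by (rule card_UN_le)
  also have "\<dots> \<le> (\<Sum>(Z, R, TH)\<in>?C. card (?Ext Z TH))"
    using finite_Ext by (intro sum_mono) (auto simp: card_image_le)
  finally show ?thesis .
qed

lemma extension_count_weight_le:
  assumes "TH \<subseteq> E" "Z \<subseteq> V" "TH \<noteq> {}" "card TH \<le> s"
    and dense: "real (card TH) < m2 V E * (real (card (\<Union>TH \<union> Z)) - real c)"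
    and S: "finite S" "card S \<le> b" "1 \<le> b"
    and n: "1 \<le> real n" and p: "0 < p" "real n powr (-1 / m2 V E) \<le> p"
  shows "real (card {h \<in> V \<rightarrow>\<^sub>E {..<n}. h ` (\<Union>TH \<union> Z) \<subseteq> S}) * p ^ (s - card TH)
           \<le> real (b ^ card V) * (real n powr (- density_gap V E) * (real n ^ (card V - c) * p ^ s))"
proof -
  let ?W = "\<Union>TH \<union> Z"
  have W: "?W \<subseteq> V" using assms(1,2) edge_subset by blast
  have "card {h \<in> V \<rightarrow>\<^sub>E {..<n}. h ` ?W \<subseteq> S} \<le> card S ^ card ?W * n ^ (card V - card ?W)"
    using finite_V W S(1) by (rule card_image_subset_extensions_le)
  also have "\<dots> \<le> b ^ card V * n ^ (card V - card ?W)"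
  proof (intro mult_right_mono)
    have "card S ^ card ?W \<le> b ^ card ?W" using S(2) by (rule power_mono) simp
    also have "\<dots> \<le> b ^ card V" using W finite_V S(3) by (intro power_increasing card_mono) auto
    finally show "card S ^ card ?W \<le> b ^ card V" .
  qed simp
  finally have "real (card {h \<in> V \<rightarrow>\<^sub>E {..<n}. h ` ?W \<subseteq> S}) * p ^ (s - card TH)
      \<le> real (b ^ card V) * (real n ^ (card V - card ?W) * p ^ (s - card TH))"
    using p by (simp add: mult_right_mono flip: of_nat_mult of_nat_power)
  also have "\<dots> \<le> real (b ^ card V) * (real n powr (- density_gap V E) * (real n ^ (card V - c) * p ^ s))"
    using extension_power_le[OF assms(1-4) dense n p] by (intro mult_left_mono) auto
  finally show ?thesis .
qed

lemma rooted_images_codegree_le: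
  assumes \<A>: "finite \<A>" "\<And>Z R. (Z, R) \<in> \<A> \<Longrightarrow> Z \<subseteq> V \<and> R \<subseteq> E"
    and dense: "\<And>Z R TH. (Z, R) \<in> \<A> \<Longrightarrow> TH \<subseteq> E - R \<Longrightarrow> TH \<noteq> {} \<Longrightarrow>
                  real (card TH) < m2 V E * (real (card (\<Union>TH \<union> Z)) - real (card P))"
    and "finite P" and T: "T \<noteq> {}" "card T \<le> s"
    and n: "1 \<le> real n" and p: "0 < p" "real n powr (-1 / m2 V E) \<le> p"
  shows "real (card {B \<in> rooted_images V E n \<A> P. T \<subseteq> B}) * p ^ (s - card T)
           \<le> real (card \<A> * 2 ^ card E * (2 * card E + card P) ^ card V)
              * (real n powr (- density_gap V E) * (real n ^ (card V - card P) * p ^ s))"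
    (is "real (card ?L) * _ \<le> real (card \<A> * 2 ^ card E * ?b ^ card V) * ?gain")
proof (cases "?L = {}")
  case True
  then have "card ?L = 0" by (simp only: card.empty)
  then show ?thesis using p by simp
next
  case False
  let ?C = "root_configurations E \<A> (card T)" and ?S = "\<Union>T \<union> P"
  obtain B0 where B0: "B0 \<in> rooted_images V E n \<A> P" "T \<subseteq> B0" using False by auto
  obtain f Z R TH0 where "TH0 \<subseteq> E - R" "card TH0 = card T"
    using B0 by (rule rooted_image_supersetE)
  then have "card T \<le> card E" using finite_E by (metis Diff_subset card_mono order_trans)
  have "T \<subseteq> Kn_edges n" using B0 rooted_images_subset_Pow by blast
  then have T_fin: "finite T" "card (\<Union>T) \<le> 2 * card T"
    by (auto intro: finite_subset card_Union_le_twice)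
  have S: "finite ?S" "card ?S \<le> ?b"
    using T_fin \<open>T \<subseteq> Kn_edges n\<close> \<open>finite P\<close> \<open>card T \<le> card E\<close> card_Un_le[of "\<Union>T" P]
    by (auto simp: Kn_edges_def intro: finite_subset)
  have "card ?L \<le> (\<Sum>(Z, R, TH)\<in>?C. card {h \<in> V \<rightarrow>\<^sub>E {..<n}. h ` (\<Union>TH \<union> Z) \<subseteq> ?S})"
    by (rule card_rooted_supersets_le[OF \<A>(1) T(1) T_fin(1)])
  then have "real (card ?L) * p ^ (s - card T)
      \<le> real (\<Sum>(Z, R, TH)\<in>?C. card {h \<in> V \<rightarrow>\<^sub>E {..<n}. h ` (\<Union>TH \<union> Z) \<subseteq> ?S}) * p ^ (s - card T)"
    using p by (intro mult_right_mono of_nat_mono) auto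
  also have "\<dots> = (\<Sum>(Z, R, TH)\<in>?C. real (card {h \<in> V \<rightarrow>\<^sub>E {..<n}. h ` (\<Union>TH \<union> Z) \<subseteq> ?S}) * p ^ (s - card T))"
    by (simp add: of_nat_sum sum_distrib_right split_def)
  also have "\<dots> \<le> (\<Sum>(Z, R, TH)\<in>?C. real (?b ^ card V) * ?gain)"
  proof (rule sum_mono, clarify)
    fix Z R TH assume "(Z, R, TH) \<in> ?C"
    then have c: "(Z, R) \<in> \<A>" "TH \<subseteq> E - R" "TH \<noteq> {}" and "card TH = card T"
      by (auto simp: root_configurations_def)
    moreover have "TH \<subseteq> E" "Z \<subseteq> V" "card TH \<le> s" "1 \<le> ?b"
      using c \<A>(2) T(2) card_E_ge_2 \<open>card TH = card T\<close> by auto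
    ultimately show "real (card {h \<in> V \<rightarrow>\<^sub>E {..<n}. h ` (\<Union>TH \<union> Z) \<subseteq> ?S}) * p ^ (s - card T)
        \<le> real (?b ^ card V) * ?gain"
      using extension_count_weight_le[OF _ _ c(3) _ dense[OF c] S _ n p] by simp
  qed
  also have "\<dots> = real (card ?C) * (real (?b ^ card V) * ?gain)"
    by simp
  also have "\<dots> \<le> real (card \<A> * 2 ^ card E) * (real (?b ^ card V) * ?gain)"
    using card_root_configurations_le[OF \<A>(1) finite_E] p by (intro mult_right_mono of_nat_mono) auto
  finally show ?thesis by (simp only: of_nat_mult mult.assoc)
qed

section \<open>Tail bounds for the two shadows\<close>

lemma edge_rootsD:
  assumes "(Z, R) \<in> edge_roots E"
  shows "Z \<in> E" "R \<subseteq> E" "card R = 2"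
proof -
  obtain gH where "R = {Z, gH}" "Z \<in> E" "gH \<in> E" "Z \<noteq> gH"
    using assms by (auto simp: edge_roots_def)
  then show "Z \<in> E" "R \<subseteq> E" "card R = 2" by simp_all
qed

lemma vertex_rootsD:
  assumes "(Z, R) \<in> vertex_roots V E"
  shows "Z \<subseteq> V" "card Z = 1" "R \<subseteq> E" "card R = 1"
proof -
  obtain x gH where "Z = {x}" "R = {gH}" "x \<in> V" "gH \<in> E"
    using assms by (auto simp: vertex_roots_def)
  then show "Z \<subseteq> V" "card Z = 1" "R \<subseteq> E" "card R = 1" by simp_all
qed

lemma link_shadow_members:
  shows "hshadow (hlink (copies V E n) e) \<subseteq> Pow (Kn_edges n)"
    and "B \<in> hshadow (hlink (copies V E n) e) \<Longrightarrow> card B = card E - 2"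
proof -
  show "hshadow (hlink (copies V E n) e) \<subseteq> Pow (Kn_edges n)"
    using link_shadow_subset_rooted_images rooted_images_subset_Pow by (rule order_trans)
  show "card B = card E - 2" if "B \<in> hshadow (hlink (copies V E n) e)"
    using that link_shadow_subset_rooted_images edge_rootsD by (blast intro: card_rooted_image)
qed

lemma vertex_shadow_members:
  shows "hshadow (copies_at V E n v) \<subseteq> Pow (Kn_edges n)"
    and "B \<in> hshadow (copies_at V E n v) \<Longrightarrow> card B = card E - 1"
proof -
  show "hshadow (copies_at V E n v) \<subseteq> Pow (Kn_edges n)"
    using vertex_shadow_subset_rooted_images rooted_images_subset_Pow by (rule order_trans)
  show "card B = card E - 1" if "B \<in> hshadow (copies_at V E n v)"
    using that vertex_shadow_subset_rooted_images vertex_rootsD by (blast intro: card_rooted_image)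
qed

lemma card_link_shadow_le:
  assumes "e \<in> Kn_edges n"
  shows "card (hshadow (hlink (copies V E n) e)) \<le> 2 * card E ^ 2 * n ^ (card V - 2)"
proof -
  have e: "finite e" "card e = 2" using assms by (auto simp: Kn_edges_def intro: finite_subset)
  have "card (hshadow (hlink (copies V E n) e)) \<le> card (rooted_images V E n (edge_roots E) e)"
    using link_shadow_subset_rooted_images finite_subset[OF rooted_images_subset_Pow]
    by (intro card_mono) auto
  also have "\<dots> \<le> card (edge_roots E) * fact (card e) * n ^ (card V - card e)"
    using edge_rootsD edge_subset card_edge e
    by (intro card_rooted_images_le finite_edge_roots finite_E) auto
  also have "\<dots> \<le> 2 * card E ^ 2 * n ^ (card V - 2)"
    using card_edge_roots[OF finite_E] e by simp
  finally show ?thesis .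
qed

lemma card_vertex_shadow_le:
  "card (hshadow (copies_at V E n v)) \<le> card V * card E * n ^ (card V - 1)"
proof -
  have "card (hshadow (copies_at V E n v)) \<le> card (rooted_images V E n (vertex_roots V E) {v})"
    using vertex_shadow_subset_rooted_images finite_subset[OF rooted_images_subset_Pow]
    by (intro card_mono) auto
  also have "\<dots> \<le> card (vertex_roots V E) * fact (card {v}) * n ^ (card V - card {v})"
    using vertex_rootsD by (intro card_rooted_images_le finite_vertex_roots finite_V finite_E) auto
  also have "\<dots> \<le> card V * card E * n ^ (card V - 1)"
    using card_vertex_roots[OF finite_V finite_E] by simp
  finally show ?thesis .
qed

lemma link_shadow_codegree_le:
  assumes e: "e \<in> Kn_edges n" and T: "T \<noteq> {}" "card T \<le> card E - 2"
    and n: "1 \<le> real n" and p: "0 < p" "real n powr (-1 / m2 V E) \<le> p"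
  shows "real (card {B \<in> hshadow (hlink (copies V E n) e). T \<subseteq> B}) * p ^ (card E - 2 - card T)
    \<le> real (card E ^ 2 * 2 ^ card E * (2 * card E + 2) ^ card V)
       * (real n powr - density_gap V E * (real n ^ (card V - 2) * p ^ (card E - 2)))"
proof -
  let ?R = "rooted_images V E n (edge_roots E) e"
  have e2: "finite e" "card e = 2" using e by (auto simp: Kn_edges_def intro: finite_subset)
  have "card {B \<in> hshadow (hlink (copies V E n) e). T \<subseteq> B} \<le> card {B \<in> ?R. T \<subseteq> B}"
    using link_shadow_subset_rooted_images finite_subset[OF rooted_images_subset_Pow]
    by (intro card_mono) auto
  then have "real (card {B \<in> hshadow (hlink (copies V E n) e). T \<subseteq> B}) * p ^ (card E - 2 - card T)
      \<le> real (card {B \<in> ?R. T \<subseteq> B}) * p ^ (card E - 2 - card T)"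
    using p by (intro mult_right_mono) auto
  also have "\<dots> \<le> real (card (edge_roots E) * 2 ^ card E * (2 * card E + card e) ^ card V)
      * (real n powr - density_gap V E * (real n ^ (card V - card e) * p ^ (card E - 2)))"
  proof (rule rooted_images_codegree_le[OF finite_edge_roots[OF finite_E] _ _ e2(1) T n p])
    show "Z \<subseteq> V \<and> R \<subseteq> E" if "(Z, R) \<in> edge_roots E" for Z R
      using edge_rootsD[OF that] edge_subset by blast
    show "real (card TH) < m2 V E * (real (card (\<Union>TH \<union> Z)) - real (card e))"
      if "(Z, R) \<in> edge_roots E" "TH \<subseteq> E - R" "TH \<noteq> {}" for Z R TH
      using that link_density e2 by (auto simp: edge_roots_def)
  qed
  also have "\<dots> = real (card (edge_roots E) * 2 ^ card E * (2 * card E + 2) ^ card V)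
      * (real n powr - density_gap V E * (real n ^ (card V - 2) * p ^ (card E - 2)))"
    using e2 by simp
  also have "\<dots> \<le> real (card E ^ 2 * 2 ^ card E * (2 * card E + 2) ^ card V)
      * (real n powr - density_gap V E * (real n ^ (card V - 2) * p ^ (card E - 2)))"
    using card_edge_roots[OF finite_E] p by (intro mult_right_mono of_nat_mono) auto
  finally show ?thesis .
qed

lemma card_supersets_le_1:
  assumes "\<And>B. B \<in> F \<Longrightarrow> card B = 1" "T \<noteq> {}"
  shows "card {B \<in> F. T \<subseteq> B} \<le> 1"
proof -
  have "{B \<in> F. T \<subseteq> B} \<subseteq> {T}"
    using assms by (force simp: card_1_singleton_iff)
  then have "card {B \<in> F. T \<subseteq> B} \<le> card {T}" by (intro card_mono) auto
  then show ?thesis by simp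
qed

text \<open>For \<open>e\<^sub>H = 2\<close> the root-vertex codegree bound is trivial, as \<open>n\<^sup>v\<^sup>-\<^sup>1 p\<close> is at least
  \<open>n\<^sup>d\<close> for the density gap \<open>d\<close>.\<close>
lemma two_edges_vertex_mean_ge:
  assumes "card E = 2" "1 \<le> real n" "0 < p" "real n powr (-1 / m2 V E) \<le> p"
  shows "1 \<le> real n powr (- density_gap V E) * (real n ^ (card V - 1) * p)"
proof -
  have "1 / m2 V E = real (card V) - 2"
    using m2_eq_d2 assms(1) card_V_ge_3 by (simp add: d2_def)
  then have "density_gap V E \<le> real (card V) - real 1 - real 1 / m2 V E"
    using density_gap_bounds(2) by simp
  then show ?thesis
    using power_ratio_le_powr[OF m2_pos assms(2-4), of 1 1 1 "card V" "card V"] card_V_ge_3 by simp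
qed

lemma vertex_shadow_codegree_le:
  assumes T: "T \<noteq> {}" "card T \<le> card E - 1"
    and n: "1 \<le> real n" and p: "0 < p" "real n powr (-1 / m2 V E) \<le> p" "p \<le> 1"
  shows "real (card {B \<in> hshadow (copies_at V E n v). T \<subseteq> B}) * p ^ (card E - 1 - card T)
    \<le> real (card V * card E * 2 ^ card E * (2 * card E + 1) ^ card V)
       * (real n powr - density_gap V E * (real n ^ (card V - 1) * p ^ (card E - 1)))"
    (is "?lhs \<le> real ?C * ?gain")
proof (cases "card E = 2")
  case True
  have "?lhs \<le> 1"
    using card_supersets_le_1[of "hshadow (copies_at V E n v)" T] vertex_shadow_members(2) T(1) True p
    by (simp add: mult_le_one power_le_one)
  also have "\<dots> \<le> ?gain"
    using two_edges_vertex_mean_ge[OF True n p(1,2)] True by simp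
  also have "\<dots> \<le> real ?C * ?gain"
  proof -
    have "1 \<le> card V * card E * 2 ^ card E * (2 * card E + 1) ^ card V"
      using card_V_ge_3 card_E_ge_2 by (simp add: Suc_le_eq)
    then have "(1::real) \<le> real (card V * card E * 2 ^ card E * (2 * card E + 1) ^ card V)"
      by (metis of_nat_1 of_nat_le_iff)
    then have "1 * ?gain \<le> real ?C * ?gain" using p by (intro mult_right_mono) auto
    then show ?thesis by simp
  qed
  finally show ?thesis .
next
  case False
  then have m2: "1 < m2 V E" using card_E_ge_2 by (intro m2_gt_1) simp
  let ?R = "rooted_images V E n (vertex_roots V E) {v}"
  have "card {B \<in> hshadow (copies_at V E n v). T \<subseteq> B} \<le> card {B \<in> ?R. T \<subseteq> B}"
    using vertex_shadow_subset_rooted_images finite_subset[OF rooted_images_subset_Pow]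
    by (intro card_mono) auto
  then have "?lhs \<le> real (card {B \<in> ?R. T \<subseteq> B}) * p ^ (card E - 1 - card T)"
    using p by (intro mult_right_mono) auto
  also have "\<dots> \<le> real (card (vertex_roots V E) * 2 ^ card E * (2 * card E + card {v}) ^ card V)
      * (real n powr - density_gap V E * (real n ^ (card V - card {v}) * p ^ (card E - 1)))"
  proof (rule rooted_images_codegree_le[OF finite_vertex_roots[OF finite_V finite_E] _ _ _ T n p(1,2)])
    show "Z \<subseteq> V \<and> R \<subseteq> E" if "(Z, R) \<in> vertex_roots V E" for Z R
      using vertex_rootsD[OF that] by blast
    show "real (card TH) < m2 V E * (real (card (\<Union>TH \<union> Z)) - real (card {v}))"
      if root: "(Z, R) \<in> vertex_roots V E" and TH: "TH \<subseteq> E - R" "TH \<noteq> {}" for Z R TH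
    proof -
      obtain x gH where "Z = {x}" "R = {gH}" "x \<in> V" "gH \<in> E"
        using root by (auto simp: vertex_roots_def)
      then show ?thesis using vertex_density[OF m2 \<open>gH \<in> E\<close> _ TH(2) \<open>x \<in> V\<close>] TH(1) by simp
    qed
  qed simp
  also have "\<dots> = real (card (vertex_roots V E) * 2 ^ card E * (2 * card E + 1) ^ card V) * ?gain"
    by simp
  also have "\<dots> \<le> real ?C * ?gain"
    using card_vertex_roots[OF finite_V finite_E] p by (intro mult_right_mono of_nat_mono) auto
  finally show ?thesis .
qed

lemma link_shadow_prob_le:
  assumes e: "e \<in> Kn_edges n" and n: "1 \<le> real n" and p: "real n powr (-1 / m2 V E) \<le> p" "p \<le> 1"
  shows "measure_pmf.prob (Gnp n p)
      {G. 4 * real (card E) ^ 2 * real n ^ (card V - 2) * p ^ (card E - 2)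
            \<le> real (card (hrestrict (hshadow (hlink (copies V E n) e)) G))}
    \<le> ((1 + real ((K * (card E - 2)) ^ (card E - 2))
            * (real (card E ^ 2 * 2 ^ card E * (2 * card E + 2) ^ card V) * real n powr - density_gap V E)) / 2) ^ K"
proof -
  let ?Y = "real n ^ (card V - 2) * p ^ (card E - 2)"
  have p0: "0 < p" using n p(1) by (smt (verit) powr_gt_zero)
  then have "0 < ?Y" using n by simp
  moreover have "4 \<le> real (card E) ^ 2"
    using card_E_ge_2 power_mono[of 2 "real (card E)" 2] by simp
  ultimately have "1 * ?Y \<le> 2 * real (card E) ^ 2 * ?Y"
    by (intro mult_right_mono) linarith+
  then have Y: "?Y \<le> 2 * real (card E) ^ 2 * ?Y" by simp
  have threshold: "4 * real (card E) ^ 2 * real n ^ (card V - 2) * p ^ (card E - 2) = 2 * (2 * real (card E) ^ 2 * ?Y)"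
    by simp
  show ?thesis unfolding threshold
  proof (rule prob_Gnp_card_hrestrict_ge_twice[OF less_imp_le[OF p0] p(2) link_shadow_members[where n=n and e=e]])
    have "real (card (hshadow (hlink (copies V E n) e))) \<le> 2 * real (card E) ^ 2 * real n ^ (card V - 2)"
      using of_nat_mono[OF card_link_shadow_le[OF e]] by simp
    then show "real (card (hshadow (hlink (copies V E n) e))) * p ^ (card E - 2) \<le> 2 * real (card E) ^ 2 * ?Y"
      using mult_right_mono[of _ _ "p ^ (card E - 2)"] p0 by (simp add: mult.assoc)
    show "0 < 2 * real (card E) ^ 2 * ?Y" using \<open>0 < ?Y\<close> card_E_ge_2 by simp
    show "real (card {B \<in> hshadow (hlink (copies V E n) e). T \<subseteq> B}) * p ^ (card E - 2 - card T)
        \<le> real (card E ^ 2 * 2 ^ card E * (2 * card E + 2) ^ card V) * real n powr - density_gap V E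
           * (2 * real (card E) ^ 2 * ?Y)"
      if "T \<noteq> {}" "card T \<le> card E - 2" for T
    proof -
      note link_shadow_codegree_le[OF e that n p0 p(1)]
      also have "real (card E ^ 2 * 2 ^ card E * (2 * card E + 2) ^ card V) * (real n powr - density_gap V E * ?Y)
          \<le> real (card E ^ 2 * 2 ^ card E * (2 * card E + 2) ^ card V)
             * (real n powr - density_gap V E * (2 * real (card E) ^ 2 * ?Y))"
        using Y by (intro mult_left_mono) auto
      finally show ?thesis by (simp only: mult.assoc)
    qed
  qed (auto intro!: mult_nonneg_nonneg)
qed

lemma vertex_shadow_prob_le:
  assumes n: "1 \<le> real n" and p: "real n powr (-1 / m2 V E) \<le> p" "p \<le> 1"
  shows "measure_pmf.prob (Gnp n p)
      {G. 2 * real (card V) * real (card E) * real n ^ (card V - 1) * p ^ (card E - 1)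
            \<le> real (card (hrestrict (hshadow (copies_at V E n v)) G))}
    \<le> ((1 + real ((K * (card E - 1)) ^ (card E - 1))
            * (real (card V * card E * 2 ^ card E * (2 * card E + 1) ^ card V) * real n powr - density_gap V E)) / 2) ^ K"
proof -
  let ?Y = "real n ^ (card V - 1) * p ^ (card E - 1)"
  have p0: "0 < p" using n p(1) by (smt (verit) powr_gt_zero)
  then have "0 < ?Y" using n by simp
  moreover have "1 * 1 \<le> real (card V) * real (card E)"
    using card_V_ge_3 card_E_ge_2 by (intro mult_mono) auto
  ultimately have "1 * ?Y \<le> real (card V) * real (card E) * ?Y"
    by (intro mult_right_mono) auto
  then have Y: "?Y \<le> real (card V) * real (card E) * ?Y" by simp
  have threshold: "2 * real (card V) * real (card E) * real n ^ (card V - 1) * p ^ (card E - 1)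
      = 2 * (real (card V) * real (card E) * ?Y)"
    by simp
  show ?thesis unfolding threshold
  proof (rule prob_Gnp_card_hrestrict_ge_twice[OF less_imp_le[OF p0] p(2) vertex_shadow_members[where n=n and v=v]])
    have "real (card (hshadow (copies_at V E n v))) \<le> real (card V) * real (card E) * real n ^ (card V - 1)"
      using of_nat_mono[OF card_vertex_shadow_le] by simp
    then show "real (card (hshadow (copies_at V E n v))) * p ^ (card E - 1) \<le> real (card V) * real (card E) * ?Y"
      using mult_right_mono[of _ _ "p ^ (card E - 1)"] p0 by (simp add: mult.assoc)
    show "0 < real (card V) * real (card E) * ?Y" using \<open>0 < ?Y\<close> card_E_ge_2 card_V_ge_3 by simp
    show "real (card {B \<in> hshadow (copies_at V E n v). T \<subseteq> B}) * p ^ (card E - 1 - card T)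
        \<le> real (card V * card E * 2 ^ card E * (2 * card E + 1) ^ card V) * real n powr - density_gap V E
           * (real (card V) * real (card E) * ?Y)"
      if "T \<noteq> {}" "card T \<le> card E - 1" for T
    proof -
      note vertex_shadow_codegree_le[OF that n p0 p]
      also have "real (card V * card E * 2 ^ card E * (2 * card E + 1) ^ card V) * (real n powr - density_gap V E * ?Y)
          \<le> real (card V * card E * 2 ^ card E * (2 * card E + 1) ^ card V)
             * (real n powr - density_gap V E * (real (card V) * real (card E) * ?Y))"
        using Y by (intro mult_left_mono) auto
      finally show ?thesis by (simp only: mult.assoc)
    qed
  qed (auto intro!: mult_nonneg_nonneg)
qed

lemma link_shadow_tail:
  "\<exists>N. \<forall>n\<ge>N. \<forall>p e. real n powr (-1 / m2 V E) \<le> p \<longrightarrow> p \<le> 1 \<longrightarrow> e \<in> Kn_edges n \<longrightarrow>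
     measure_pmf.prob (Gnp n p)
       {G. 4 * real (card E) ^ 2 * real n ^ (card V - 2) * p ^ (card E - 2)
             \<le> real (card (hrestrict (hshadow (hlink (copies V E n) e)) G))} \<le> real n powr -6"
proof -
  let ?C = "real (card E ^ 2 * 2 ^ card E * (2 * card E + 2) ^ card V)"
  obtain N where N: "\<forall>n\<ge>N. \<exists>K. ((1 + real ((K * (card E - 2)) ^ (card E - 2)) * ?C
      * real n powr - density_gap V E) / 2) ^ K \<le> real n powr -6"
    using exists_moment_order[of "density_gap V E" ?C "card E - 2"] density_gap_bounds(1) by auto
  show ?thesis
  proof (intro exI[of _ "max 1 N"] allI impI)
    fix n p e assume n: "max 1 N \<le> n" and p: "real n powr (-1 / m2 V E) \<le> p" "p \<le> 1" "e \<in> Kn_edges n"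
    then obtain K where "((1 + real ((K * (card E - 2)) ^ (card E - 2)) * ?C
        * real n powr - density_gap V E) / 2) ^ K \<le> real n powr -6"
      using N by auto
    then show "measure_pmf.prob (Gnp n p)
       {G. 4 * real (card E) ^ 2 * real n ^ (card V - 2) * p ^ (card E - 2)
             \<le> real (card (hrestrict (hshadow (hlink (copies V E n) e)) G))} \<le> real n powr -6"
      using link_shadow_prob_le[OF p(3) _ p(1,2), of K] n by (simp add: mult.assoc)
  qed
qed

lemma vertex_shadow_tail:
  "\<exists>N. \<forall>n\<ge>N. \<forall>p v. real n powr (-1 / m2 V E) \<le> p \<longrightarrow> p \<le> 1 \<longrightarrow> v < n \<longrightarrow>
     measure_pmf.prob (Gnp n p)
       {G. 2 * real (card V) * real (card E) * real n ^ (card V - 1) * p ^ (card E - 1)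
             \<le> real (card (hrestrict (hshadow (copies_at V E n v)) G))} \<le> real n powr -6"
proof -
  let ?C = "real (card V * card E * 2 ^ card E * (2 * card E + 1) ^ card V)"
  obtain N where N: "\<forall>n\<ge>N. \<exists>K. ((1 + real ((K * (card E - 1)) ^ (card E - 1)) * ?C
      * real n powr - density_gap V E) / 2) ^ K \<le> real n powr -6"
    using exists_moment_order[of "density_gap V E" ?C "card E - 1"] density_gap_bounds(1) by auto
  show ?thesis
  proof (intro exI[of _ "max 1 N"] allI impI)
    fix n p v assume n: "max 1 N \<le> n" and p: "real n powr (-1 / m2 V E) \<le> p" "p \<le> 1"
    then obtain K where "((1 + real ((K * (card E - 1)) ^ (card E - 1)) * ?C
        * real n powr - density_gap V E) / 2) ^ K \<le> real n powr -6"
      using N by auto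
    then show "measure_pmf.prob (Gnp n p)
       {G. 2 * real (card V) * real (card E) * real n ^ (card V - 1) * p ^ (card E - 1)
             \<le> real (card (hrestrict (hshadow (copies_at V E n v)) G))} \<le> real n powr -6"
      using vertex_shadow_prob_le[OF _ p, of v K] n by (simp add: mult.assoc)
  qed
qed

end

theorem mainTheorem8:
  fixes V :: "'a set" and E :: "'a set set"
  assumes "strictly_2_balanced V E"
  shows "\<exists>N. \<forall>n\<ge>N. \<forall>p::real. real n powr (- 1 / m2 V E) \<le> p \<and> p \<le> 1 \<longrightarrow>
     (\<forall>e\<in>Kn_edges n.
        measure_pmf.prob (Gnp n p)
          {G. real (card (hrestrict (hshadow (hlink (copies V E n) e)) G))
                \<ge> 4 * real (card E) ^ 2 * real n ^ (card V - 2) * p ^ (card E - 2)}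
        \<le> real n powr (-6)) \<and>
     (\<forall>v<n.
        measure_pmf.prob (Gnp n p)
          {G. real (card (hrestrict (hshadow (copies_at V E n v)) G))
                \<ge> 2 * real (card V) * real (card E) * real n ^ (card V - 1) * p ^ (card E - 1)}
        \<le> real n powr (-6))"
proof -
  interpret strictly_2_balanced_graph V E by unfold_locales (rule assms)
  obtain N1 N2 where
    N1: "\<forall>n\<ge>N1. \<forall>p e. real n powr (-1 / m2 V E) \<le> p \<longrightarrow> p \<le> 1 \<longrightarrow> e \<in> Kn_edges n \<longrightarrow>
      measure_pmf.prob (Gnp n p)
        {G. 4 * real (card E) ^ 2 * real n ^ (card V - 2) * p ^ (card E - 2)
              \<le> real (card (hrestrict (hshadow (hlink (copies V E n) e)) G))} \<le> real n powr -6" and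
    N2: "\<forall>n\<ge>N2. \<forall>p v. real n powr (-1 / m2 V E) \<le> p \<longrightarrow> p \<le> 1 \<longrightarrow> v < n \<longrightarrow>
      measure_pmf.prob (Gnp n p)
        {G. 2 * real (card V) * real (card E) * real n ^ (card V - 1) * p ^ (card E - 1)
              \<le> real (card (hrestrict (hshadow (copies_at V E n v)) G))} \<le> real n powr -6"
    using link_shadow_tail vertex_shadow_tail by blast
  show ?thesis
    by (rule exI[of _ "max N1 N2"]) (use N1 N2 in auto)
qed

end
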